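(* For every feature $f \colon \mathcal{X} \to \mathbb{R}^d$ with $\mathrm{span}\{f\} = \mathcal{G}$, $H(f) = \frac12 \left( \mathbb{E}_{P_{XX'}}[k_{\mathcal{G}}(X, X')] - \mathbb{E}_{P_X P_{X'}}[k_{\mathcal{G}}(X, X')] \right)$, where the joint distribution of $X$ and $X'$ is $P_{XX'}(x, x') = \sum_{y \in \mathcal{Y}} P_Y(y) P_{X|Y=y}(x) P_{X|Y=y}(x')$.
   Context: $X, Y$ are random variables on finite alphabets $\mathcal{X}, \mathcal{Y}$ with joint distribution $P_{X,Y}$ and marginals $P_X, P_Y$. For a $d$-dimensional feature $f$, $\tilde f(x) = f(x) - \mathbb{E}[f(X)]$, $\Lambda_f = \mathbb{E}[f(X) f^T(X)]$, and the H-score is $H(f) = \frac12 \mathbb{E}\left[ \left\| \mathbb{E}[\Lambda_f^{-1/2} \tilde f(X) \mid Y] \right\|^2 \right]$. For a subspace $\mathcal{G}$ of functions $\mathcal{X}\to\mathbb{R}$ with basis $f = (f_1,\dots,f_d)^T$, the projection kernel is $k_{\mathcal{G}}(x, x') = f^T(x) \Lambda_f^{-1} f(x')$. *)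

theory Defs
  imports "HOL-Analysis.Analysis"
begin

text \<open>A joint distribution on finite alphabets is a function P :: 'x \<Rightarrow> 'y \<Rightarrow> real.
  Real functions on the finite alphabet 'x are represented as vectors in real^'x.\<close>

definition is_joint_dist :: "('x::finite \<Rightarrow> 'y::finite \<Rightarrow> real) \<Rightarrow> bool" where
  "is_joint_dist P \<longleftrightarrow> (\<forall>x y. 0 \<le> P x y) \<and> (\<Sum>x\<in>UNIV. \<Sum>y\<in>UNIV. P x y) = 1"

definition PX :: "('x::finite \<Rightarrow> 'y::finite \<Rightarrow> real) \<Rightarrow> 'x \<Rightarrow> real" where
  "PX P x = (\<Sum>y\<in>UNIV. P x y)"

definition PY :: "('x::finite \<Rightarrow> 'y::finite \<Rightarrow> real) \<Rightarrow> 'y \<Rightarrow> real" where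
  "PY P y = (\<Sum>x\<in>UNIV. P x y)"

text \<open>Conditional distribution P_{X|Y=y}(x) (convention: 0 if P_Y(y) = 0).\<close>
definition PXgY :: "('x::finite \<Rightarrow> 'y::finite \<Rightarrow> real) \<Rightarrow> 'y \<Rightarrow> 'x \<Rightarrow> real" where
  "PXgY P y x = P x y / PY P y"

definition meanX :: "('x::finite \<Rightarrow> 'y::finite \<Rightarrow> real) \<Rightarrow> ('x \<Rightarrow> 'v::real_vector) \<Rightarrow> 'v" where
  "meanX P g = (\<Sum>x\<in>UNIV. PX P x *\<^sub>R g x)"

definition condE :: "('x::finite \<Rightarrow> 'y::finite \<Rightarrow> real) \<Rightarrow> ('x \<Rightarrow> 'v::real_vector) \<Rightarrow> 'y \<Rightarrow> 'v" where
  "condE P g y = (\<Sum>x\<in>UNIV. PXgY P y x *\<^sub>R g x)"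

definition Lam :: "('x::finite \<Rightarrow> 'y::finite \<Rightarrow> real) \<Rightarrow> ('x \<Rightarrow> real^'d::finite) \<Rightarrow> real^'d^'d" where
  "Lam P f = (\<chi> i j. \<Sum>x\<in>UNIV. PX P x * (f x $ i) * (f x $ j))"

definition pos_def_mat :: "real^'d::finite^'d \<Rightarrow> bool" where
  "pos_def_mat S \<longleftrightarrow> (\<forall>v. v \<noteq> 0 \<longrightarrow> 0 < v \<bullet> (S *v v))"

definition inv_sqrt :: "real^'d::finite^'d \<Rightarrow> real^'d^'d" where
  "inv_sqrt A = (THE S. transpose S = S \<and> pos_def_mat S \<and> S ** S = matrix_inv A)"

definition Hscore :: "('x::finite \<Rightarrow> 'y::finite \<Rightarrow> real) \<Rightarrow> ('x \<Rightarrow> real^'d::finite) \<Rightarrow> real" where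
  "Hscore P f = 1/2 * (\<Sum>y\<in>UNIV. PY P y *
      (norm (condE P (\<lambda>x. inv_sqrt (Lam P f) *v (f x - meanX P f)) y))\<^sup>2)"

definition comp_fun :: "('x::finite \<Rightarrow> real^'d::finite) \<Rightarrow> 'd \<Rightarrow> real^'x" where
  "comp_fun f i = (\<chi> x. f x $ i)"

definition feature_span :: "('x::finite \<Rightarrow> real^'d::finite) \<Rightarrow> (real^'x) set" where
  "feature_span f = span (range (comp_fun f))"

text \<open>Projection kernel of G computed from a basis b of G: k(x,x') = b(x)^T \<Lambda>_b^{-1} b(x').\<close>
definition proj_kernel :: "('x::finite \<Rightarrow> 'y::finite \<Rightarrow> real) \<Rightarrow> ('x \<Rightarrow> real^'e::finite) \<Rightarrow> 'x \<Rightarrow> 'x \<Rightarrow> real" where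
  "proj_kernel P b x x' = b x \<bullet> (matrix_inv (Lam P b) *v b x')"

definition PXX :: "('x::finite \<Rightarrow> 'y::finite \<Rightarrow> real) \<Rightarrow> 'x \<Rightarrow> 'x \<Rightarrow> real" where
  "PXX P x x' = (\<Sum>y\<in>UNIV. PY P y * PXgY P y x * PXgY P y x')"

end

theory Submission
  imports Defs
begin

text \<open>Write \<open>M\<close> for the inverse of \<open>\<Lambda>\<^sub>f\<close>, \<open>m = E f(X)\<close> and \<open>g(y) = E[f(X) | Y = y]\<close>. The symmetric
  square root \<open>S\<close> of \<open>M\<close> turns \<open>\<parallel>S u\<parallel>\<^sup>2\<close> into \<open>u \<bullet> M u\<close>, so \<open>2 H(f)\<close> is the \<open>M\<close>-variance of \<open>g(Y)\<close>,
  whose mean is \<open>m\<close>: it equals \<open>E[g(Y) \<bullet> M g(Y)] - m \<bullet> M m\<close>. Expanding both expectations yields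
  the expectations of \<open>f(x) \<bullet> M f(x')\<close> under \<open>P\<^sub>X\<^sub>X\<^sub>'\<close> and under \<open>P\<^sub>X P\<^sub>X\<^sub>'\<close>. This kernel reproduces \<open>G\<close>,
  i.e. \<open>E[k(x, X') h(X')] = h(x)\<close> for \<open>h \<in> G\<close>, and therefore agrees with the kernel built from any other
  basis of \<open>G\<close>.

  That \<open>S\<close> is well defined needs existence and uniqueness of positive definite square roots. Both
  follow from the spectral theorem for symmetric matrices, proved here by maximising the quadratic
  form on the unit sphere of an invariant subspace.\<close>

lemma symmetric_matrix_inner_commute:
  fixes A :: "real^'n^'n"
  assumes "transpose A = A"
  shows "(A *v x) \<bullet> y = x \<bullet> (A *v y)"
  by (metis assms dot_lmul_matrix vector_transpose_matrix)

lemma norm_symmetric_matrix_mult_square: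
  fixes S :: "real^'n^'n"
  assumes "transpose S = S"
  shows "(norm (S *v u))\<^sup>2 = u \<bullet> ((S ** S) *v u)"
  by (simp add: power2_norm_eq_inner symmetric_matrix_inner_commute[OF assms] matrix_vector_mul_assoc)

lemma matrix_eq_on_expansion:
  fixes S T :: "real^'n^'m"
  assumes expand: "\<And>x. x = (\<Sum>v\<in>B. (v \<bullet> x) *\<^sub>R v)" and eq: "\<And>v. v \<in> B \<Longrightarrow> S *v v = T *v v"
  shows "S = T"
  unfolding matrix_eq
proof
  fix x
  have "S *v x = (\<Sum>v\<in>B. (v \<bullet> x) *\<^sub>R (S *v v))"
    by (subst expand) (simp add: vec.sum matrix_vector_mult_scaleR)
  also have "\<dots> = (\<Sum>v\<in>B. (v \<bullet> x) *\<^sub>R (T *v v))"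
    using eq by simp
  also have "\<dots> = T *v x"
    by (subst (2) expand) (simp add: vec.sum matrix_vector_mult_scaleR)
  finally show "S *v x = T *v x" .
qed

lemma quadratic_nonneg_imp_linear_coeff_zero:
  fixes a b :: real
  assumes nonneg: "\<And>t. 0 \<le> 2 * t * a + t\<^sup>2 * b" and "0 \<le> b"
  shows "a = 0"
proof -
  let ?t = "- a / (b + 1)"
  have "2 * ?t * a + ?t\<^sup>2 * b = - a\<^sup>2 * (b + 2) / (b + 1)\<^sup>2"
    using \<open>0 \<le> b\<close> by (simp add: field_simps power2_eq_square add_nonneg_eq_0_iff)
  then have "0 \<le> - a\<^sup>2 * (b + 2) / (b + 1)\<^sup>2" using nonneg by metis
  then have "a\<^sup>2 * (b + 2) \<le> 0" using \<open>0 \<le> b\<close> by (simp add: divide_le_0_iff)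
  then show ?thesis using \<open>0 \<le> b\<close>
    by (smt (verit) mult_pos_pos zero_less_power2)
qed

lemma symmetric_eigenvector_in_invariant_subspace:
  fixes A :: "real^'n^'n"
  assumes sym: "transpose A = A" and S: "subspace S" and invariant: "\<forall>x\<in>S. A *v x \<in> S"
    and nontrivial: "S \<noteq> {0}"
  shows "\<exists>v\<in>S. norm v = 1 \<and> A *v v = (v \<bullet> (A *v v)) *\<^sub>R v"
proof -
  let ?K = "S \<inter> sphere 0 1"
  have "compact ?K"
    by (simp add: S closed_Int_compact closed_subspace)
  obtain x where x: "x \<in> S" "x \<noteq> 0" using nontrivial S subspace_0 by blast
  then have "x /\<^sub>R norm x \<in> ?K" using S by (simp add: subspace_scale)
  then obtain v where v: "v \<in> ?K" and v_max: "\<forall>y\<in>?K. y \<bullet> (A *v y) \<le> v \<bullet> (A *v v)"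
    using continuous_attains_sup[OF \<open>compact ?K\<close>, of "\<lambda>y. y \<bullet> (A *v y)"]
    by (fastforce intro: continuous_intros)
  define l where "l = v \<bullet> (A *v v)"
  define B where "B y = l *\<^sub>R y - A *v y" for y
  have B_nonneg: "0 \<le> y \<bullet> B y" if "y \<in> S" for y
  proof (cases "y = 0")
    case False
    then have "y /\<^sub>R norm y \<in> ?K" using that S by (simp add: subspace_scale)
    then have "(y /\<^sub>R norm y) \<bullet> (A *v (y /\<^sub>R norm y)) \<le> l" using v_max l_def by blast
    then have "y \<bullet> (A *v y) \<le> l * (norm y)\<^sup>2" using False
      by (simp add: matrix_vector_mult_scaleR field_simps power2_eq_square)
    then show ?thesis unfolding B_def by (simp add: inner_diff_right power2_norm_eq_inner)
  qed simp
  have B_v: "v \<bullet> B v = 0"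
    using v unfolding B_def l_def by (simp add: inner_diff_right power2_norm_eq_inner[symmetric])
  have B_add: "B (y + t *\<^sub>R w) = B y + t *\<^sub>R B w" for y w t
    unfolding B_def by (simp add: matrix_vector_right_distrib matrix_vector_mult_scaleR algebra_simps)
  have B_sym: "y \<bullet> B w = w \<bullet> B y" for y w
    unfolding B_def using symmetric_matrix_inner_commute[OF sym, of w y]
    by (simp add: inner_diff_right inner_commute)
  \<comment> \<open>\<open>B\<close> is positive semidefinite on \<open>S\<close> and vanishes at \<open>v\<close>, so \<open>B v\<close> is orthogonal to \<open>S\<close>.\<close>
  have B_v_orthogonal: "w \<bullet> B v = 0" if w: "w \<in> S" for w
  proof (rule quadratic_nonneg_imp_linear_coeff_zero)
    show "0 \<le> w \<bullet> B w" using B_nonneg w by blast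
    fix t
    have "v + t *\<^sub>R w \<in> S" using v w S by (simp add: subspace_add subspace_scale)
    then have "0 \<le> (v + t *\<^sub>R w) \<bullet> B (v + t *\<^sub>R w)" by (rule B_nonneg)
    also have "\<dots> = 2 * t * (w \<bullet> B v) + t\<^sup>2 * (w \<bullet> B w)"
      unfolding B_add using B_v B_sym[of v w]
      by (simp add: inner_add_left inner_add_right algebra_simps power2_eq_square)
    finally show "0 \<le> 2 * t * (w \<bullet> B v) + t\<^sup>2 * (w \<bullet> B w)" .
  qed
  have "B v \<in> S" unfolding B_def using v invariant S by (simp add: subspace_diff subspace_scale)
  then have "B v = 0" using B_v_orthogonal inner_eq_zero_iff by blast
  then show ?thesis using v l_def unfolding B_def by auto
qed

lemma symmetric_matrix_eigenbasis_subspace: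
  fixes A :: "real^'n^'n"
  assumes sym: "transpose A = A" and "subspace S" and "\<forall>x\<in>S. A *v x \<in> S"
  shows "\<exists>B\<subseteq>S. finite B \<and> pairwise orthogonal B \<and> (\<forall>v\<in>B. norm v = 1 \<and> A *v v = (v \<bullet> (A *v v)) *\<^sub>R v)
      \<and> (\<forall>x\<in>S. x = (\<Sum>v\<in>B. (v \<bullet> x) *\<^sub>R v))"
  using assms(2,3)
proof (induction "dim S" arbitrary: S rule: less_induct)
  case less
  show ?case
  proof (cases "S = {0}")
    case True
    then show ?thesis by (intro exI[of _ "{}"]) auto
  next
    case False
    obtain u where u: "u \<in> S" "norm u = 1" "A *v u = (u \<bullet> (A *v u)) *\<^sub>R u"
      using symmetric_eigenvector_in_invariant_subspace[OF sym less.prems False] by blast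
    define S' where "S' = S \<inter> {x. orthogonal u x}"
    have S': "subspace S'"
      unfolding S'_def by (intro subspace_inter less.prems(1) subspace_orthogonal_to_vector)
    have "orthogonal u (A *v x)" if "orthogonal u x" for x
    proof -
      have "u \<bullet> (A *v x) = (A *v u) \<bullet> x" by (simp add: symmetric_matrix_inner_commute[OF sym])
      also have "\<dots> = (u \<bullet> (A *v u)) * (u \<bullet> x)" by (subst u(3)) simp
      finally show ?thesis using that by (simp add: orthogonal_def)
    qed
    then have S'_invariant: "\<forall>x\<in>S'. A *v x \<in> S'"
      using less.prems(2) unfolding S'_def by blast
    have u_unit: "u \<bullet> u = 1" using u(2) by (simp add: norm_eq_1)
    then have "u \<notin> S'" unfolding S'_def orthogonal_def by simp
    then have "S' \<subset> S" using u(1) unfolding S'_def by blast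
    then have "dim S' < dim S"
      using S' less.prems(1) by (metis dim_psubset span_eq_iff)
    then obtain B' where B': "B' \<subseteq> S'" "finite B'" "pairwise orthogonal B'"
      "\<forall>v\<in>B'. norm v = 1 \<and> A *v v = (v \<bullet> (A *v v)) *\<^sub>R v"
      "\<forall>x\<in>S'. x = (\<Sum>v\<in>B'. (v \<bullet> x) *\<^sub>R v)"
      using less.hyps S' S'_invariant by blast
    have u_orth: "\<forall>v\<in>B'. orthogonal u v" using B'(1) unfolding S'_def by auto
    then have "u \<notin> B'" using u_unit by (auto simp: orthogonal_def)
    have "x = (\<Sum>v\<in>insert u B'. (v \<bullet> x) *\<^sub>R v)" if x: "x \<in> S" for x
    proof -
      define x' where "x' = x - (u \<bullet> x) *\<^sub>R u"
      have "x' \<in> S'" unfolding S'_def x'_def orthogonal_def using x u(1) less.prems(1) u_unit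
        by (simp add: subspace_diff subspace_scale inner_diff_right)
      then have "x' = (\<Sum>v\<in>B'. (v \<bullet> x') *\<^sub>R v)" using B'(5) by blast
      also have "\<dots> = (\<Sum>v\<in>B'. (v \<bullet> x) *\<^sub>R v)"
        using u_orth by (intro sum.cong) (auto simp: x'_def inner_diff_right inner_commute orthogonal_def)
      finally show ?thesis using B'(2) \<open>u \<notin> B'\<close> unfolding x'_def by (simp add: algebra_simps)
    qed
    moreover have "pairwise orthogonal (insert u B')"
      using B'(3) u_orth by (simp add: pairwise_insert orthogonal_commute)
    ultimately show ?thesis
      using B' u unfolding S'_def by (intro exI[of _ "insert u B'"]) auto
  qed
qed

lemma symmetric_matrix_eigenbasis:
  fixes A :: "real^'n^'n"
  assumes "transpose A = A"
  obtains B where "finite B" "pairwise orthogonal B"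
    "\<And>v. v \<in> B \<Longrightarrow> norm v = 1" "\<And>v. v \<in> B \<Longrightarrow> A *v v = (v \<bullet> (A *v v)) *\<^sub>R v"
    "\<And>x. x = (\<Sum>v\<in>B. (v \<bullet> x) *\<^sub>R v)"
  using symmetric_matrix_eigenbasis_subspace[OF assms subspace_UNIV] by auto

lemma pos_def_sqrt_exists:
  fixes M :: "real^'n^'n"
  assumes sym: "transpose M = M" and pd: "pos_def_mat M"
  shows "\<exists>S. transpose S = S \<and> pos_def_mat S \<and> S ** S = M"
proof -
  obtain B where fin: "finite B" and orth: "pairwise orthogonal B" and unit: "\<And>v. v \<in> B \<Longrightarrow> norm v = 1"
    and eigen: "\<And>v. v \<in> B \<Longrightarrow> M *v v = (v \<bullet> (M *v v)) *\<^sub>R v"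
    and expand: "\<And>x. x = (\<Sum>v\<in>B. (v \<bullet> x) *\<^sub>R v)"
    using symmetric_matrix_eigenbasis[OF sym] by blast
  define r where "r v = sqrt (v \<bullet> (M *v v))" for v
  have r_pos: "r v > 0" if "v \<in> B" for v
  proof -
    have "v \<noteq> 0" using unit[OF that] by auto
    then show ?thesis using pd unfolding r_def pos_def_mat_def by simp
  qed
  define S :: "real^'n^'n" where "S = (\<chi> i j. \<Sum>v\<in>B. r v * v$i * v$j)"
  have S_mult: "S *v x = (\<Sum>v\<in>B. (r v * (v \<bullet> x)) *\<^sub>R v)" for x
    unfolding S_def
    by (simp add: vec_eq_iff matrix_vector_mult_def inner_vec_def sum_distrib_left sum_distrib_right
        algebra_simps sum.swap[of _ B])
  have S_sym: "transpose S = S"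
    unfolding S_def transpose_def by (simp add: vec_eq_iff mult.commute mult.left_commute)
  have S_eigen: "S *v v = r v *\<^sub>R v" if v: "v \<in> B" for v
  proof -
    have "(\<Sum>w\<in>B. (r w * (w \<bullet> v)) *\<^sub>R w) = (\<Sum>w\<in>B. if w = v then r v *\<^sub>R v else 0)"
      using orth unit v by (intro sum.cong) (auto simp: pairwise_def orthogonal_def norm_eq_1)
    then show ?thesis using fin v by (simp add: S_mult)
  qed
  have "0 < x \<bullet> (S *v x)" if "x \<noteq> 0" for x
  proof -
    obtain v where v: "v \<in> B" "v \<bullet> x \<noteq> 0"
      using expand[of x] \<open>x \<noteq> 0\<close> by (metis (no_types, lifting) scale_eq_0_iff sum.neutral)
    have "0 < r v * (v \<bullet> x)\<^sup>2" using v r_pos by simp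
    also have "\<dots> \<le> (\<Sum>w\<in>B. r w * (w \<bullet> x)\<^sup>2)"
      using v fin r_pos by (intro member_le_sum) (simp_all add: order_less_imp_le)
    also have "\<dots> = x \<bullet> (S *v x)"
      by (simp add: S_mult inner_sum_right power2_eq_square inner_commute mult.assoc)
    finally show ?thesis .
  qed
  then have "pos_def_mat S" unfolding pos_def_mat_def by blast
  moreover have "S ** S = M"
  proof (rule matrix_eq_on_expansion[OF expand])
    fix v assume v: "v \<in> B"
    have r_square: "(r v)\<^sup>2 = v \<bullet> (M *v v)" using r_pos[OF v] unfolding r_def by simp
    have "(S ** S) *v v = (r v)\<^sup>2 *\<^sub>R v"
      by (simp add: matrix_vector_mul_assoc[symmetric] S_eigen[OF v] matrix_vector_mult_scaleR
          power2_eq_square)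
    also have "\<dots> = M *v v" unfolding r_square by (rule eigen[OF v, symmetric])
    finally show "(S ** S) *v v = M *v v" .
  qed
  ultimately show ?thesis using S_sym by blast
qed

lemma pos_def_sqrt_unique:
  fixes S T :: "real^'n^'n"
  assumes S_sym: "transpose S = S" and S_pd: "pos_def_mat S"
    and T_sym: "transpose T = T" and T_pd: "pos_def_mat T" and square: "S ** S = T ** T"
  shows "S = T"
proof -
  obtain B where "finite B" "pairwise orthogonal B" and unit: "\<And>v. v \<in> B \<Longrightarrow> norm v = 1"
    and eigen: "\<And>v. v \<in> B \<Longrightarrow> T *v v = (v \<bullet> (T *v v)) *\<^sub>R v"
    and expand: "\<And>x. x = (\<Sum>v\<in>B. (v \<bullet> x) *\<^sub>R v)"
    using symmetric_matrix_eigenbasis[OF T_sym] by blast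
  show ?thesis
  proof (rule matrix_eq_on_expansion[OF expand])
    fix v assume v: "v \<in> B"
    define \<mu> where "\<mu> = v \<bullet> (T *v v)"
    have T_v: "T *v v = \<mu> *\<^sub>R v" unfolding \<mu>_def by (rule eigen[OF v])
    have "v \<noteq> 0" using unit[OF v] by auto
    then have "\<mu> > 0" using T_pd unfolding \<mu>_def pos_def_mat_def by simp
    \<comment> \<open>\<open>w\<close> would be an eigenvector of \<open>S\<close> with the negative eigenvalue \<open>-\<mu>\<close>.\<close>
    define w where "w = S *v v - \<mu> *\<^sub>R v"
    have "S *v (S *v v) = T *v (T *v v)" using square by (metis matrix_vector_mul_assoc)
    also have "\<dots> = (\<mu> * \<mu>) *\<^sub>R v" by (simp add: T_v matrix_vector_mult_scaleR)
    finally have "S *v w = - \<mu> *\<^sub>R w"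
      unfolding w_def by (simp add: matrix_vector_mult_diff_distrib matrix_vector_mult_scaleR algebra_simps)
    then have "w \<bullet> (S *v w) \<le> 0" using \<open>\<mu> > 0\<close> by simp
    then have "w = 0" using S_pd unfolding pos_def_mat_def by (meson not_less)
    then show "S *v v = T *v v" unfolding w_def T_v by simp
  qed
qed

lemma
  fixes A :: "real^'n^'n"
  assumes "invertible A"
  shows matrix_inv_right: "A ** matrix_inv A = mat 1"
    and matrix_inv_left: "matrix_inv A ** A = mat 1"
proof -
  have "\<exists>A'. A ** A' = mat 1 \<and> A' ** A = mat 1" using assms unfolding invertible_def .
  then have "A ** matrix_inv A = mat 1 \<and> matrix_inv A ** A = mat 1"
    unfolding matrix_inv_def by (rule someI_ex)
  then show "A ** matrix_inv A = mat 1" "matrix_inv A ** A = mat 1" by auto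
qed

lemma symmetric_matrix_inv:
  fixes A :: "real^'n^'n"
  assumes inv: "invertible A" and sym: "transpose A = A"
  shows "transpose (matrix_inv A) = matrix_inv A"
proof -
  have left_inverse: "transpose (matrix_inv A) ** A = mat 1"
    using matrix_transpose_mul[of A "matrix_inv A"] matrix_inv_right[OF inv] sym by simp
  have "transpose (matrix_inv A) = (transpose (matrix_inv A) ** A) ** matrix_inv A"
    by (simp add: matrix_mul_assoc[symmetric] matrix_inv_right[OF inv])
  then show ?thesis unfolding left_inverse by simp
qed

lemma pos_def_matrix_inv:
  fixes A :: "real^'n^'n"
  assumes inv: "invertible A" and pd: "pos_def_mat A"
  shows "pos_def_mat (matrix_inv A)"
  unfolding pos_def_mat_def
proof (intro allI impI)
  fix v :: "real^'n" assume "v \<noteq> 0"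
  define u where "u = matrix_inv A *v v"
  have A_u: "A *v u = v"
    unfolding u_def by (simp add: matrix_vector_mul_assoc matrix_inv_right[OF inv])
  then have "u \<noteq> 0" using \<open>v \<noteq> 0\<close> by auto
  then have "0 < u \<bullet> (A *v u)" using pd unfolding pos_def_mat_def by simp
  then show "0 < v \<bullet> (matrix_inv A *v v)" using A_u u_def by (simp add: inner_commute)
qed

lemma inv_sqrt_square:
  fixes A :: "real^'n^'n"
  assumes "invertible A" "transpose A = A" "pos_def_mat A"
  shows "transpose (inv_sqrt A) = inv_sqrt A" "inv_sqrt A ** inv_sqrt A = matrix_inv A"
proof -
  let ?root = "\<lambda>S. transpose S = S \<and> pos_def_mat S \<and> S ** S = matrix_inv A"
  have "\<exists>S. ?root S"
    by (rule pos_def_sqrt_exists[OF symmetric_matrix_inv[OF assms(1,2)] pos_def_matrix_inv[OF assms(1,3)]])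
  moreover have "S = T" if "?root S" "?root T" for S T
    using that by (auto intro: pos_def_sqrt_unique)
  ultimately have "\<exists>!S. ?root S" by (rule ex_ex1I)
  then have "?root (inv_sqrt A)" unfolding inv_sqrt_def by (rule theI')
  then show "transpose (inv_sqrt A) = inv_sqrt A" "inv_sqrt A ** inv_sqrt A = matrix_inv A"
    by auto
qed

lemma inner_matrix_sum_sum:
  fixes M :: "real^'n^'n"
  shows "(\<Sum>x\<in>X. a x *\<^sub>R u x) \<bullet> (M *v (\<Sum>x'\<in>X'. c x' *\<^sub>R w x'))
    = (\<Sum>x\<in>X. \<Sum>x'\<in>X'. a x * c x' * (u x \<bullet> (M *v w x')))"
  by (simp add: vec.sum matrix_vector_mult_scaleR inner_sum_left inner_sum_right sum_distrib_left mult_ac)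
    (rule sum.swap)

lemma quadratic_form_variance:
  fixes M :: "real^'n^'n" and g :: "'a \<Rightarrow> real^'n"
  assumes sym: "transpose M = M" and weights: "sum w Y = 1" and mean: "m = (\<Sum>y\<in>Y. w y *\<^sub>R g y)"
  shows "(\<Sum>y\<in>Y. w y * ((g y - m) \<bullet> (M *v (g y - m))))
    = (\<Sum>y\<in>Y. w y * (g y \<bullet> (M *v g y))) - m \<bullet> (M *v m)"
proof -
  have expand: "(g y - m) \<bullet> (M *v (g y - m))
      = g y \<bullet> (M *v g y) - 2 * (m \<bullet> (M *v g y)) + m \<bullet> (M *v m)" for y
  proof -
    have "g y \<bullet> (M *v m) = m \<bullet> (M *v g y)"
      using symmetric_matrix_inner_commute[OF sym, of m "g y"] by (simp add: inner_commute)
    then show ?thesis by (simp add: inner_diff_left inner_diff_right matrix_vector_mult_diff_distrib)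
  qed
  have cross: "(\<Sum>y\<in>Y. w y * (m \<bullet> (M *v g y))) = m \<bullet> (M *v m)"
    using mean by (simp add: vec.sum matrix_vector_mult_scaleR inner_sum_right)
  have "(\<Sum>y\<in>Y. w y * ((g y - m) \<bullet> (M *v (g y - m))))
      = (\<Sum>y\<in>Y. w y * (g y \<bullet> (M *v g y) - 2 * (m \<bullet> (M *v g y)) + m \<bullet> (M *v m)))"
    by (simp only: expand)
  also have "\<dots> = (\<Sum>y\<in>Y. w y * (g y \<bullet> (M *v g y))) - 2 * (\<Sum>y\<in>Y. w y * (m \<bullet> (M *v g y)))
        + sum w Y * (m \<bullet> (M *v m))"
    by (simp add: algebra_simps sum.distrib sum_subtractf sum_distrib_left sum_distrib_right)
  finally show ?thesis using cross weights by simp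
qed

lemma PX_nonneg: "is_joint_dist P \<Longrightarrow> 0 \<le> PX P x"
  unfolding is_joint_dist_def PX_def by (simp add: sum_nonneg)

lemma PY_mult_PXgY:
  assumes "is_joint_dist P"
  shows "PY P y * PXgY P y x = P x y"
proof (cases "PY P y = 0")
  case True
  have nonneg: "\<forall>x. 0 \<le> P x y" using assms unfolding is_joint_dist_def by blast
  then have "P x y \<le> PY P y"
    unfolding PY_def by (intro member_le_sum) simp_all
  then show ?thesis using True nonneg by (simp add: order_antisym)
qed (simp add: PXgY_def)

lemma sum_PY: "is_joint_dist P \<Longrightarrow> (\<Sum>y\<in>UNIV. PY P y) = 1"
  unfolding is_joint_dist_def PY_def by (metis sum.swap)

lemma sum_PXgY: "PY P y \<noteq> 0 \<Longrightarrow> (\<Sum>x\<in>UNIV. PXgY P y x) = 1"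
  unfolding PXgY_def by (simp flip: sum_divide_distrib PY_def)

lemma condE_matrix_vector_mult:
  fixes A :: "real^'n^'m"
  shows "condE P (\<lambda>x. A *v g x) y = A *v condE P g y"
  unfolding condE_def by (simp add: vec.sum matrix_vector_mult_scaleR)

lemma condE_diff_const:
  assumes "PY P y \<noteq> 0"
  shows "condE P (\<lambda>x. g x - c) y = condE P g y - c"
  using sum_PXgY[OF assms]
  by (simp add: condE_def scaleR_diff_right sum_subtractf flip: scaleR_sum_left)

lemma sum_PY_condE:
  assumes "is_joint_dist P"
  shows "(\<Sum>y\<in>UNIV. PY P y *\<^sub>R condE P g y) = meanX P g"
proof -
  have "(\<Sum>y\<in>UNIV. PY P y *\<^sub>R condE P g y) = (\<Sum>y\<in>UNIV. \<Sum>x\<in>UNIV. P x y *\<^sub>R g x)"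
    unfolding condE_def by (simp add: scaleR_sum_right PY_mult_PXgY[OF assms])
  also have "\<dots> = (\<Sum>x\<in>UNIV. \<Sum>y\<in>UNIV. P x y *\<^sub>R g x)" by (rule sum.swap)
  also have "\<dots> = meanX P g" unfolding meanX_def PX_def by (simp add: scaleR_sum_left)
  finally show ?thesis .
qed

lemma sum_PY_condE_quadratic_form:
  fixes M :: "real^'n^'n"
  shows "(\<Sum>y\<in>UNIV. PY P y * (condE P h y \<bullet> (M *v condE P h y)))
    = (\<Sum>x\<in>UNIV. \<Sum>x'\<in>UNIV. PXX P x x' * (h x \<bullet> (M *v h x')))"
proof -
  have "(\<Sum>y\<in>UNIV. PY P y * (condE P h y \<bullet> (M *v condE P h y)))
      = (\<Sum>y\<in>UNIV. \<Sum>x\<in>UNIV. \<Sum>x'\<in>UNIV. PY P y * PXgY P y x * PXgY P y x' * (h x \<bullet> (M *v h x')))"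
    unfolding condE_def inner_matrix_sum_sum by (simp add: sum_distrib_left mult_ac)
  also have "\<dots> = (\<Sum>x\<in>UNIV. \<Sum>y\<in>UNIV. \<Sum>x'\<in>UNIV. PY P y * PXgY P y x * PXgY P y x' * (h x \<bullet> (M *v h x')))"
    by (rule sum.swap)
  also have "\<dots> = (\<Sum>x\<in>UNIV. \<Sum>x'\<in>UNIV. \<Sum>y\<in>UNIV. PY P y * PXgY P y x * PXgY P y x' * (h x \<bullet> (M *v h x')))"
    by (rule sum.cong[OF refl]) (rule sum.swap)
  also have "\<dots> = (\<Sum>x\<in>UNIV. \<Sum>x'\<in>UNIV. PXX P x x' * (h x \<bullet> (M *v h x')))"
    unfolding PXX_def by (simp add: sum_distrib_right)
  finally show ?thesis .
qed

lemma Lam_mult_vector: "Lam P h *v v = (\<Sum>x\<in>UNIV. (PX P x * (h x \<bullet> v)) *\<^sub>R h x)"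
proof -
  have "(Lam P h *v v) $ i = (\<Sum>x\<in>UNIV. (PX P x * (h x \<bullet> v)) *\<^sub>R h x) $ i" for i
  proof -
    have "(Lam P h *v v) $ i = (\<Sum>j\<in>UNIV. \<Sum>x\<in>UNIV. PX P x * h x $ i * h x $ j * v $ j)"
      by (simp add: matrix_vector_mult_def Lam_def sum_distrib_right)
    also have "\<dots> = (\<Sum>x\<in>UNIV. \<Sum>j\<in>UNIV. PX P x * h x $ i * h x $ j * v $ j)"
      by (rule sum.swap)
    also have "\<dots> = (\<Sum>x\<in>UNIV. (PX P x * (h x \<bullet> v)) *\<^sub>R h x) $ i"
      by (simp add: inner_vec_def sum_distrib_left mult_ac)
    finally show ?thesis .
  qed
  then show ?thesis by (simp add: vec_eq_iff)
qed

lemma symmetric_Lam: "transpose (Lam P h) = Lam P h"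
  by (simp add: transpose_def Lam_def vec_eq_iff mult_ac)

lemma pos_def_Lam:
  fixes h :: "'x::finite \<Rightarrow> real^'d::finite"
  assumes P: "is_joint_dist P" and inv: "invertible (Lam P h)"
  shows "pos_def_mat (Lam P h)"
  unfolding pos_def_mat_def
proof (intro allI impI)
  fix v :: "real^'d" assume "v \<noteq> 0"
  have nonneg: "\<And>x. 0 \<le> PX P x * (h x \<bullet> v)\<^sup>2" using PX_nonneg[OF P] by simp
  have quadratic: "v \<bullet> (Lam P h *v v) = (\<Sum>x\<in>UNIV. PX P x * (h x \<bullet> v)\<^sup>2)"
    unfolding Lam_mult_vector by (simp add: inner_sum_right power2_eq_square inner_commute mult_ac)
  show "0 < v \<bullet> (Lam P h *v v)"
  proof (rule ccontr)
    assume "\<not> 0 < v \<bullet> (Lam P h *v v)"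
    then have "(\<Sum>x\<in>UNIV. PX P x * (h x \<bullet> v)\<^sup>2) = 0"
      using quadratic sum_nonneg[of UNIV "\<lambda>x. PX P x * (h x \<bullet> v)\<^sup>2"] nonneg by fastforce
    then have "\<forall>x. PX P x * (h x \<bullet> v)\<^sup>2 = 0" using nonneg by (simp add: sum_nonneg_eq_0_iff)
    then have "Lam P h *v v = 0" unfolding Lam_mult_vector by (simp add: sum.neutral)
    then have "v = 0"
      using matrix_vector_mul_assoc[of "matrix_inv (Lam P h)" "Lam P h" v] matrix_inv_left[OF inv] by simp
    then show False using \<open>v \<noteq> 0\<close> by simp
  qed
qed

lemma proj_kernel_commute:
  assumes "invertible (Lam P h)"
  shows "proj_kernel P h x x' = proj_kernel P h x' x"
  unfolding proj_kernel_def
  using symmetric_matrix_inner_commute[OF symmetric_matrix_inv[OF assms symmetric_Lam], of "h x'" "h x"]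
  by (simp add: inner_commute)

lemma proj_kernel_reproducing:
  assumes inv: "invertible (Lam P h)"
  shows "(\<Sum>x'\<in>UNIV. PX P x' * proj_kernel P h x x' * (h x' \<bullet> c)) = h x \<bullet> c"
proof -
  let ?M = "matrix_inv (Lam P h)"
  have "(\<Sum>x'\<in>UNIV. PX P x' * proj_kernel P h x x' * (h x' \<bullet> c))
      = (\<Sum>x'\<in>UNIV. PX P x' * (h x' \<bullet> c) * ((?M *v h x) \<bullet> h x'))"
    unfolding proj_kernel_def
    using symmetric_matrix_inner_commute[OF symmetric_matrix_inv[OF inv symmetric_Lam]]
    by (simp add: mult_ac)
  also have "\<dots> = (?M *v h x) \<bullet> (Lam P h *v c)"
    unfolding Lam_mult_vector by (simp add: inner_sum_right)
  also have "\<dots> = h x \<bullet> c"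
    by (simp add: symmetric_matrix_inner_commute[OF symmetric_matrix_inv[OF inv symmetric_Lam]]
        matrix_vector_mul_assoc matrix_inv_left[OF inv])
  finally show ?thesis .
qed

lemma feature_span_eq_range: "feature_span h = range (\<lambda>c. \<chi> x. h x \<bullet> c)"
proof -
  let ?L = "\<lambda>c. \<chi> x. h x \<bullet> c"
  have "linear ?L" by (rule linearI) (simp_all add: vec_eq_iff inner_add_right)
  have "comp_fun h i = ?L (axis i 1)" for i by (simp add: comp_fun_def inner_axis)
  then have "range (comp_fun h) = ?L ` Basis" by (auto simp: Basis_vec_def)
  then show ?thesis
    unfolding feature_span_def by (simp add: span_linear_image[OF \<open>linear ?L\<close>] span_Basis)
qed

lemma proj_kernel_basis_independent:
  assumes span: "feature_span b = feature_span f"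
    and inv_b: "invertible (Lam P b)" and inv_f: "invertible (Lam P f)"
  shows "proj_kernel P b x z = proj_kernel P f x z"
proof -
  have "(\<chi> x'. proj_kernel P b x x') = (\<chi> x'. b x' \<bullet> (matrix_inv (Lam P b) *v b x))"
    using symmetric_matrix_inner_commute[OF symmetric_matrix_inv[OF inv_b symmetric_Lam]]
    by (simp add: proj_kernel_def inner_commute)
  then have "(\<chi> x'. proj_kernel P b x x') \<in> feature_span f"
    unfolding span[symmetric] unfolding feature_span_eq_range by (rule range_eqI)
  then obtain c1 where "(\<chi> x'. proj_kernel P b x x') = (\<chi> x'. f x' \<bullet> c1)"
    unfolding feature_span_eq_range by blast
  then have c1: "proj_kernel P b x x' = f x' \<bullet> c1" for x'
    by (simp add: vec_eq_iff)
  have "(\<chi> x'. proj_kernel P f x' z) = (\<chi> x'. f x' \<bullet> (matrix_inv (Lam P f) *v f z))"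
    by (simp add: proj_kernel_def)
  then have "(\<chi> x'. proj_kernel P f x' z) \<in> feature_span b"
    unfolding span unfolding feature_span_eq_range by (rule range_eqI)
  then obtain c2 where "(\<chi> x'. proj_kernel P f x' z) = (\<chi> x'. b x' \<bullet> c2)"
    unfolding feature_span_eq_range by blast
  then have c2: "proj_kernel P f x' z = b x' \<bullet> c2" for x'
    by (simp add: vec_eq_iff)
  \<comment> \<open>Reproduce \<open>f z \<bullet> c1\<close> with the kernel of \<open>f\<close> and \<open>b x \<bullet> c2\<close> with the kernel of \<open>b\<close>.\<close>
  have "proj_kernel P b x z = (\<Sum>x'\<in>UNIV. PX P x' * proj_kernel P f z x' * (f x' \<bullet> c1))"
    unfolding proj_kernel_reproducing[OF inv_f] c1 ..
  also have "\<dots> = (\<Sum>x'\<in>UNIV. PX P x' * proj_kernel P b x x' * (b x' \<bullet> c2))"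
    using c1 c2 proj_kernel_commute[OF inv_f, of z] by (simp add: mult_ac)
  also have "\<dots> = proj_kernel P f x z"
    unfolding proj_kernel_reproducing[OF inv_b] c2 ..
  finally show ?thesis .
qed

lemma Hscore_as_variance:
  fixes P :: "'x::finite \<Rightarrow> 'y::finite \<Rightarrow> real" and f :: "'x \<Rightarrow> real^'d::finite"
  assumes P: "is_joint_dist P" and inv: "invertible (Lam P f)"
  shows "2 * Hscore P f
    = (\<Sum>y\<in>UNIV. PY P y * (condE P f y \<bullet> (matrix_inv (Lam P f) *v condE P f y)))
      - meanX P f \<bullet> (matrix_inv (Lam P f) *v meanX P f)"
proof -
  define M where "M = matrix_inv (Lam P f)"
  define m where "m = meanX P f"
  define g where "g = condE P f"
  have M_sym: "transpose M = M"
    unfolding M_def by (rule symmetric_matrix_inv[OF inv symmetric_Lam])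
  have mean: "m = (\<Sum>y\<in>UNIV. PY P y *\<^sub>R g y)"
    unfolding m_def g_def by (rule sum_PY_condE[OF P, symmetric])
  have root: "transpose (inv_sqrt (Lam P f)) = inv_sqrt (Lam P f)"
    "inv_sqrt (Lam P f) ** inv_sqrt (Lam P f) = M"
    using inv_sqrt_square[OF inv symmetric_Lam pos_def_Lam[OF P inv]] unfolding M_def by auto
  have weighted_norm: "PY P y * (norm (condE P (\<lambda>x. inv_sqrt (Lam P f) *v (f x - m)) y))\<^sup>2
      = PY P y * ((g y - m) \<bullet> (M *v (g y - m)))" for y
    by (cases "PY P y = 0")
      (simp_all add: condE_matrix_vector_mult norm_symmetric_matrix_mult_square[OF root(1)] root(2)
        condE_diff_const g_def)
  have "2 * Hscore P f = (\<Sum>y\<in>UNIV. PY P y * ((g y - m) \<bullet> (M *v (g y - m))))"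
    unfolding Hscore_def m_def[symmetric] weighted_norm by simp
  also have "\<dots> = (\<Sum>y\<in>UNIV. PY P y * (g y \<bullet> (M *v g y))) - m \<bullet> (M *v m)"
    by (rule quadratic_form_variance[OF M_sym sum_PY[OF P] mean])
  finally show ?thesis unfolding M_def m_def g_def .
qed

theorem proposition2:
  fixes P :: "'x::finite \<Rightarrow> 'y::finite \<Rightarrow> real"
    and G :: "(real^'x) set"
    and b :: "'x \<Rightarrow> real^'e::finite"
    and f :: "'x \<Rightarrow> real^'d::finite"
  assumes P: "is_joint_dist P"
    and b_basis: "feature_span b = G" "invertible (Lam P b)"
    and f_span: "feature_span f = G"
    and f_inv: "invertible (Lam P f)"
  shows "Hscore P f =
    1/2 * ((\<Sum>x\<in>UNIV. \<Sum>x'\<in>UNIV. PXX P x x' * proj_kernel P b x x')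
         - (\<Sum>x\<in>UNIV. \<Sum>x'\<in>UNIV. PX P x * PX P x' * proj_kernel P b x x'))"
proof -
  have kernel: "proj_kernel P b x x' = f x \<bullet> (matrix_inv (Lam P f) *v f x')" for x x'
    using proj_kernel_basis_independent[of b f P x x'] b_basis f_span f_inv
    by (simp add: proj_kernel_def)
  have "2 * Hscore P f
      = (\<Sum>y\<in>UNIV. PY P y * (condE P f y \<bullet> (matrix_inv (Lam P f) *v condE P f y)))
        - meanX P f \<bullet> (matrix_inv (Lam P f) *v meanX P f)"
    by (rule Hscore_as_variance[OF P f_inv])
  also have "(\<Sum>y\<in>UNIV. PY P y * (condE P f y \<bullet> (matrix_inv (Lam P f) *v condE P f y)))
      = (\<Sum>x\<in>UNIV. \<Sum>x'\<in>UNIV. PXX P x x' * proj_kernel P b x x')"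
    unfolding sum_PY_condE_quadratic_form kernel ..
  also have "meanX P f \<bullet> (matrix_inv (Lam P f) *v meanX P f)
      = (\<Sum>x\<in>UNIV. \<Sum>x'\<in>UNIV. PX P x * PX P x' * proj_kernel P b x x')"
    unfolding meanX_def inner_matrix_sum_sum kernel ..
  finally show ?thesis by simp
qed

end
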